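(* Suppose $\theta_t$ is time-varying and $\mathbb{S}_\theta=\{\theta\in\mathbb{R}^{d_\theta}:[\theta]_k\ge0\ \forall k,\ \sum_k[\theta]_k=1\}$. Then the system $x_{t+1}=A_t(\theta_t)x_t+B_t(\theta_t)u_t$ is time-varying SMP in each of the following cases: (a) $v_t(\theta_t)=\sum_{k=1}^{d_\theta}[\theta_t]_kv^{(k)}$ with deterministic vectors $v^{(k)}$, the conditional expectation $\mathrm{E}[v_tv_t^\top|\theta_\bullet]$ being taken as the deterministic value $v_tv_t^\top$: with $N=d_\theta^2$, $\phi(\theta_t)=\mathrm{vec}(\theta_t\theta_t^\top)$, $M^{(d_\theta(k'-1)+k)}=\tfrac12(v^{(k)}v^{(k')\top}+v^{(k')}v^{(k)\top})$; (b) $v_t(\theta_t)=\sum_{k=1}^{d_\theta}[\theta_t]_kv_t^{(k)}$ with random vertices $v_t^{(k)}$ i.i.d. with respect to $t$ and independent of the parameters: with $N=d_\theta^2$, $\phi(\theta_t)=\mathrm{vec}(\theta_t\theta_t^\top)$, $M^{(d_\theta(k'-1)+k)}=\tfrac12\mathrm{E}[v_t^{(k)}v_t^{(k')\top}+v_t^{(k')}v_t^{(k)\top}]$; (c) $\mathrm{E}[v_t(\theta_t)|\theta_\bullet]=\sum_k[\theta_t]_k\mu^{(k)}$ and $\mathrm{Cov}[v_t(\theta_t)|\theta_\bullet]=\sum_k[\theta_t]_k\Sigma^{(k)}$ with deterministic $\mu^{(k)}$ and symmetric $\Sigma^{(k)}$: with $N=d_\theta^2$, $\phi(\theta_t)=\mathrm{vec}(\theta_t\theta_t^\top)$,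 $M^{(d_\theta(k'-1)+k)}=\tfrac12(\mu^{(k)}\mu^{(k')\top}+\mu^{(k')}\mu^{(k)\top})+\Sigma^{(k)}$.
   Context: System $x_{t+1}=A_t(\theta_t)x_t+B_t(\theta_t)u_t$ with $x_t\in\mathbb{R}^n$, $u_t\in\mathbb{R}^m$, uncertain $\theta_t\in\mathbb{S}_\theta\subset\mathbb{R}^{d_\theta}$, random $v_t(\theta_t):=\mathrm{vec}([A_t(\theta_t),B_t(\theta_t)])\in\mathbb{R}^{n(n+m)}$ ($\mathrm{vec}$ stacks columns) with conditional density $p(v_t\mid\theta_t)$, independent over $t$; $\mathrm{E}[\cdot|\theta_\bullet]$, $\mathrm{Cov}[\cdot|\theta_\bullet]$ are conditional on the parameter sequence $(\theta_0,\theta_1,\dots)$. $\mathbb{P}_N:=\{\varphi\in\mathbb{R}^N:\varphi_k\ge0,\sum\varphi_k=1\}$. SMP: there exist $N$, symmetric $M^{(1)},\dots,M^{(N)}$ and $\phi:\mathbb{S}_\theta\to\mathbb{P}_N$ with $\mathrm{E}[v_tv_t^\top|\theta_\bullet]=\sum_k[\phi(\theta_t)]_kM^{(k)}$ for all $t$ and all parameter sequences in $\mathbb{S}_\theta$; time-varying (TV) SMP if the parameters are allowed to vary with $t$. *)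

theory Defs
  imports "HOL-Probability.Probability"
begin

definition outer :: "real^'d \<Rightarrow> real^'d \<Rightarrow> real^'d^'d" where
  "outer u w = (\<chi> i j. u $ i * w $ j)"

definition prob_simplex :: "(real^'i::finite) set" where
  "prob_simplex = {x. (\<forall>k. 0 \<le> x $ k) \<and> (\<Sum>k\<in>UNIV. x $ k) = 1}"

text \<open>Moments of a random vector X on the probability space P (P is the conditional
  law given the parameter sequence, so these are the conditional moments).\<close>
definition cond_mean :: "'w measure \<Rightarrow> ('w \<Rightarrow> real^'d) \<Rightarrow> real^'d" where
  "cond_mean P X = integral\<^sup>L P X"

definition second_moment :: "'w measure \<Rightarrow> ('w \<Rightarrow> real^'d) \<Rightarrow> real^'d^'d" where
  "second_moment P X = integral\<^sup>L P (\<lambda>\<omega>. outer (X \<omega>) (X \<omega>))"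

definition cond_cov :: "'w measure \<Rightarrow> ('w \<Rightarrow> real^'d) \<Rightarrow> real^'d^'d" where
  "cond_cov P X = integral\<^sup>L P (\<lambda>\<omega>. outer (X \<omega> - cond_mean P X) (X \<omega> - cond_mean P X))"

text \<open>Time-varying SMP with explicit witnesses: the index type 'i plays the role of
  {1..N}, M the matrices M^(k), phi the map S_theta -> P_N.
  V thetas t is the random vector v_t(theta_t) under the conditional law given the
  parameter sequence thetas (defined on the probability space P).\<close>
definition tv_smp_with ::
  "(real^'p) set \<Rightarrow> 'w measure \<Rightarrow> ((nat \<Rightarrow> real^'p) \<Rightarrow> nat \<Rightarrow> 'w \<Rightarrow> real^'d)
    \<Rightarrow> ('i::finite \<Rightarrow> real^'d^'d) \<Rightarrow> (real^'p \<Rightarrow> real^'i) \<Rightarrow> bool" where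
  "tv_smp_with S P V M \<phi> \<longleftrightarrow>
     (\<forall>k. transpose (M k) = M k) \<and>
     (\<forall>\<theta>\<in>S. \<phi> \<theta> \<in> prob_simplex) \<and>
     (\<forall>\<theta>s. (\<forall>t. \<theta>s t \<in> S) \<longrightarrow>
        (\<forall>t. second_moment P (V \<theta>s t) = (\<Sum>k\<in>UNIV. (\<phi> (\<theta>s t)) $ k *\<^sub>R M k)))"

end

theory Submission
  imports Defs
begin

(*
  Expanding v = (SUM k. theta_k w_k) by bilinearity of the outer product gives
  E[v v^T] = (SUM k k'. theta_k theta_k' E[w_k w_k'^T]).  The weights theta_k theta_k' are
  symmetric in (k, k') and form a point of the simplex of dimension d_theta^2, so each
  summand may be replaced by its symmetrisation, a symmetric matrix.  In case (b) the terms
  E[w_k w_k'^T] do not depend on t because the vertices are identically distributed; in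
  case (c) E[v v^T] = Cov[v] + E[v] E[v]^T, and the covariance term fits the same pattern
  because (SUM k. theta_k Sigma_k) = (SUM k k'. theta_k theta_k' Sigma_k) on the simplex.
*)

lemma bounded_bilinear_outer: "bounded_bilinear (outer :: real^'d::finite \<Rightarrow> real^'d \<Rightarrow> real^'d^'d)"
  unfolding bilinear_conv_bounded_bilinear[symmetric] bilinear_def
  by (auto intro!: linearI simp: outer_def vec_eq_iff algebra_simps)

interpretation outer: bounded_bilinear outer
  by (rule bounded_bilinear_outer)

lemma outer_sum_scaleR:
  "outer (\<Sum>a\<in>A. c a *\<^sub>R u a) (\<Sum>b\<in>B. d b *\<^sub>R w b)
     = (\<Sum>a\<in>A. \<Sum>b\<in>B. (c a * d b) *\<^sub>R outer (u a) (w b))"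
  by (simp add: outer.sum_left outer.sum_right outer.scaleR_left outer.scaleR_right scaleR_sum_right)
    (subst sum.swap, simp add: mult.commute)

lemma transpose_outer: "transpose (outer u w) = outer w u"
  by (simp add: outer_def transpose_def vec_eq_iff)

lemma transpose_add: "transpose (A + B) = transpose A + transpose B"
  by (simp add: transpose_def vec_eq_iff)

lemma bounded_linear_transpose:
  "bounded_linear (transpose :: real^'n::finite^'m::finite \<Rightarrow> real^'m^'n)"
  unfolding linear_conv_bounded_linear[symmetric]
  by (rule linearI) (simp_all add: transpose_add transpose_scalar)

lemma transpose_integral:
  fixes F :: "'a \<Rightarrow> real^'n::finite^'m::finite"
  assumes "integrable P F"
  shows "transpose (integral\<^sup>L P F) = integral\<^sup>L P (\<lambda>\<omega>. transpose (F \<omega>))"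
  using integral_bounded_linear[OF bounded_linear_transpose assms] by simp

lemma borel_measurable_vec_lambda:
  fixes X :: "'i::finite \<Rightarrow> 'a \<Rightarrow> real^'n::finite"
  assumes "\<And>i. X i \<in> borel_measurable M"
  shows "(\<lambda>\<omega>. \<chi> i. X i \<omega>) \<in> borel_measurable M"
  using assms
  by (auto simp: borel_measurable_euclidean_space[where 'c="real^'n^'i"] Basis_vec_def inner_axis
      intro!: borel_measurable_inner measurable_compose[OF _ borel_measurable_nth])

lemma integral_comp_eq_of_distr_eq:
  fixes f :: "'b \<Rightarrow> 'c::{banach, second_countable_topology}"
  assumes "X \<in> measurable M N" "Y \<in> measurable M N" "f \<in> borel_measurable N"
    and "distr M N X = distr M N Y"
  shows "integral\<^sup>L M (\<lambda>\<omega>. f (X \<omega>)) = integral\<^sup>L M (\<lambda>\<omega>. f (Y \<omega>))"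
  using assms by (metis integral_distr)

lemma second_moment_const:
  assumes "prob_space P"
  shows "second_moment P (\<lambda>_. v) = outer v v"
  using prob_space.prob_space[OF assms] by (simp add: second_moment_def)

lemma second_moment_eq_cond_cov_add:
  assumes P: "prob_space P" and X: "integrable P X" and XX: "integrable P (\<lambda>\<omega>. outer (X \<omega>) (X \<omega>))"
  shows "second_moment P X = cond_cov P X + outer (cond_mean P X) (cond_mean P X)"
proof -
  define m where "m = cond_mean P X"
  have Xm: "integrable P (\<lambda>\<omega>. outer (X \<omega>) m)" and mX: "integrable P (\<lambda>\<omega>. outer m (X \<omega>))"
    using X by (auto intro: integrable_bounded_linear outer.bounded_linear_left outer.bounded_linear_right)
  have "integral\<^sup>L P (\<lambda>\<omega>. outer (X \<omega>) m) = outer m m" "integral\<^sup>L P (\<lambda>\<omega>. outer m (X \<omega>)) = outer m m"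
    using integral_bounded_linear[OF outer.bounded_linear_left X, of m]
      integral_bounded_linear[OF outer.bounded_linear_right X, of m]
    by (simp_all add: m_def cond_mean_def)
  moreover have "integrable P (\<lambda>_. outer m m)" "integral\<^sup>L P (\<lambda>_. outer m m) = outer m m"
    using P by (simp_all add: prob_space.prob_space finite_measure.integrable_const prob_space_def)
  moreover have "outer (X \<omega> - m) (X \<omega> - m)
      = outer (X \<omega>) (X \<omega>) - outer (X \<omega>) m - outer m (X \<omega>) + outer m m" for \<omega>
    by (simp add: outer.diff_left outer.diff_right algebra_simps)
  ultimately have "cond_cov P X = second_moment P X - outer m m"
    using XX Xm mX
    by (simp add: cond_cov_def second_moment_def m_def[symmetric])
  then show ?thesis by (simp add: m_def)
qed

lemma sum_pair_weights_symmetrize: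
  fixes f :: "'p \<Rightarrow> 'p \<Rightarrow> 'v::real_vector"
  shows "(\<Sum>a\<in>A. \<Sum>b\<in>A. (c a * c b) *\<^sub>R ((1/2) *\<^sub>R (f a b + f b a)))
    = (\<Sum>a\<in>A. \<Sum>b\<in>A. (c a * c b) *\<^sub>R f a b)"
proof -
  have "(\<Sum>a\<in>A. \<Sum>b\<in>A. (c a * c b) *\<^sub>R ((1/2) *\<^sub>R (f a b + f b a)))
    = (1/2) *\<^sub>R ((\<Sum>a\<in>A. \<Sum>b\<in>A. (c a * c b) *\<^sub>R f a b) + (\<Sum>a\<in>A. \<Sum>b\<in>A. (c a * c b) *\<^sub>R f b a))"
    by (simp add: scaleR_add_right sum.distrib scaleR_sum_right)
  also have "(\<Sum>a\<in>A. \<Sum>b\<in>A. (c a * c b) *\<^sub>R f b a) = (\<Sum>a\<in>A. \<Sum>b\<in>A. (c a * c b) *\<^sub>R f a b)"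
    by (subst sum.swap) (simp add: mult.commute)
  finally show ?thesis
    by (simp flip: scaleR_2)
qed

lemma sum_simplex_weights_eq_sum_pairs:
  fixes f :: "'p::finite \<Rightarrow> 'v::real_vector"
  assumes "\<theta> \<in> prob_simplex"
  shows "(\<Sum>a\<in>UNIV. \<theta> $ a *\<^sub>R f a) = (\<Sum>a\<in>UNIV. \<Sum>b\<in>UNIV. (\<theta> $ a * \<theta> $ b) *\<^sub>R f a)"
proof -
  have "(\<Sum>b\<in>UNIV. (\<theta> $ a * \<theta> $ b) *\<^sub>R f a) = \<theta> $ a *\<^sub>R f a" for a
    using assms unfolding scaleR_sum_left[symmetric] sum_distrib_left[symmetric] prob_simplex_def by simp
  then show ?thesis
    by simp
qed

lemma sum_UNIV_prod: "(\<Sum>kk\<in>UNIV. g kk) = (\<Sum>a\<in>UNIV. \<Sum>b\<in>UNIV. g (a, b))"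
  using sum.cartesian_product'[of g UNIV UNIV] by simp

lemma pair_weights_in_prob_simplex:
  assumes "\<theta> \<in> prob_simplex"
  shows "(\<chi> kk. \<theta> $ fst kk * \<theta> $ snd kk) \<in> prob_simplex"
  using assms by (simp add: prob_simplex_def sum_UNIV_prod flip: sum_product)

lemma tv_smp_with_pair_weightsI:
  fixes M :: "'p::finite \<times> 'p \<Rightarrow> real^'d::finite^'d"
  assumes "\<And>kk. transpose (M kk) = M kk"
    and "\<And>\<theta>s t. \<forall>t. \<theta>s t \<in> prob_simplex \<Longrightarrow>
      second_moment P (V \<theta>s t) = (\<Sum>a\<in>UNIV. \<Sum>b\<in>UNIV. (\<theta>s t $ a * \<theta>s t $ b) *\<^sub>R M (a, b))"
  shows "tv_smp_with prob_simplex P V M (\<lambda>\<theta>. \<chi> kk. \<theta> $ fst kk * \<theta> $ snd kk)"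
  unfolding tv_smp_with_def sum_UNIV_prod using assms by (auto intro: pair_weights_in_prob_simplex)

lemma tv_smp_deterministic_vertices:
  fixes v :: "'p::finite \<Rightarrow> real^'d::finite"
  assumes P: "prob_space P"
    and V: "\<And>\<theta>s t \<omega>. \<forall>t. \<theta>s t \<in> prob_simplex \<Longrightarrow> V \<theta>s t \<omega> = (\<Sum>k\<in>UNIV. \<theta>s t $ k *\<^sub>R v k)"
  shows "tv_smp_with prob_simplex P V
    (\<lambda>kk. (1/2) *\<^sub>R (outer (v (fst kk)) (v (snd kk)) + outer (v (snd kk)) (v (fst kk))))
    (\<lambda>\<theta>. \<chi> kk. \<theta> $ fst kk * \<theta> $ snd kk)"
proof (rule tv_smp_with_pair_weightsI)
  fix \<theta>s :: "nat \<Rightarrow> real^'p" and t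
  assume "\<forall>t. \<theta>s t \<in> prob_simplex"
  then have "V \<theta>s t = (\<lambda>_. \<Sum>k\<in>UNIV. \<theta>s t $ k *\<^sub>R v k)"
    using V by blast
  then show "second_moment P (V \<theta>s t) = (\<Sum>a\<in>UNIV. \<Sum>b\<in>UNIV. (\<theta>s t $ a * \<theta>s t $ b) *\<^sub>R
      ((1/2) *\<^sub>R (outer (v (fst (a, b))) (v (snd (a, b))) + outer (v (snd (a, b))) (v (fst (a, b))))))"
    unfolding fst_conv snd_conv sum_pair_weights_symmetrize
    by (simp add: second_moment_const[OF P] outer_sum_scaleR)
qed (simp add: transpose_add transpose_scalar transpose_outer add.commute)

lemma tv_smp_random_vertices:
  fixes X :: "nat \<Rightarrow> 'p::finite \<Rightarrow> 'a \<Rightarrow> real^'d::finite"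
  assumes meas: "\<And>t k. X t k \<in> borel_measurable P"
    and int: "\<And>t k k'. integrable P (\<lambda>\<omega>. outer (X t k \<omega>) (X t k' \<omega>))"
    and ident: "\<And>t. distr P borel (\<lambda>\<omega>. \<chi> k. X t k \<omega>) = distr P borel (\<lambda>\<omega>. \<chi> k. X 0 k \<omega>)"
    and V: "\<And>\<theta>s t \<omega>. \<forall>t. \<theta>s t \<in> prob_simplex \<Longrightarrow> V \<theta>s t \<omega> = (\<Sum>k\<in>UNIV. \<theta>s t $ k *\<^sub>R X t k \<omega>)"
  shows "tv_smp_with prob_simplex P V
    (\<lambda>kk. (1/2) *\<^sub>R integral\<^sup>L P (\<lambda>\<omega>. outer (X 0 (fst kk) \<omega>) (X 0 (snd kk) \<omega>)
                                 + outer (X 0 (snd kk) \<omega>) (X 0 (fst kk) \<omega>)))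
    (\<lambda>\<theta>. \<chi> kk. \<theta> $ fst kk * \<theta> $ snd kk)"
proof (rule tv_smp_with_pair_weightsI)
  define E where "E a b = integral\<^sup>L P (\<lambda>\<omega>. outer (X 0 a \<omega>) (X 0 b \<omega>))" for a b
  have "(\<lambda>x::real^'d^'p. outer (x $ a) (x $ b)) \<in> borel_measurable borel" for a b
    unfolding outer_def by (intro borel_measurable_continuous_onI continuous_intros)
  then have E: "integral\<^sup>L P (\<lambda>\<omega>. outer (X t a \<omega>) (X t b \<omega>)) = E a b" for t a b
    using integral_comp_eq_of_distr_eq[where f="\<lambda>x. outer (x $ a) (x $ b)",
        OF borel_measurable_vec_lambda[OF meas] borel_measurable_vec_lambda[OF meas] _ ident]
    by (simp add: E_def)
  fix \<theta>s :: "nat \<Rightarrow> real^'p" and t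
  assume "\<forall>t. \<theta>s t \<in> prob_simplex"
  then have "second_moment P (V \<theta>s t)
      = integral\<^sup>L P (\<lambda>\<omega>. \<Sum>a\<in>UNIV. \<Sum>b\<in>UNIV. (\<theta>s t $ a * \<theta>s t $ b) *\<^sub>R outer (X t a \<omega>) (X t b \<omega>))"
    using V by (simp add: second_moment_def outer_sum_scaleR)
  also have "\<dots> = (\<Sum>a\<in>UNIV. \<Sum>b\<in>UNIV. (\<theta>s t $ a * \<theta>s t $ b) *\<^sub>R E a b)"
    using int by (simp add: E)
  also have "\<dots> = (\<Sum>a\<in>UNIV. \<Sum>b\<in>UNIV. (\<theta>s t $ a * \<theta>s t $ b) *\<^sub>R ((1/2) *\<^sub>R (E a b + E b a)))"
    by (rule sum_pair_weights_symmetrize[symmetric])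
  finally show "second_moment P (V \<theta>s t) = (\<Sum>a\<in>UNIV. \<Sum>b\<in>UNIV. (\<theta>s t $ a * \<theta>s t $ b) *\<^sub>R
      ((1/2) *\<^sub>R integral\<^sup>L P (\<lambda>\<omega>. outer (X 0 (fst (a, b)) \<omega>) (X 0 (snd (a, b)) \<omega>)
                                 + outer (X 0 (snd (a, b)) \<omega>) (X 0 (fst (a, b)) \<omega>))))"
    using int by (simp add: E_def)
qed (use int in \<open>simp add: transpose_scalar transpose_integral transpose_add transpose_outer
    add.commute\<close>)

lemma tv_smp_affine_moments:
  fixes \<mu> :: "'p::finite \<Rightarrow> real^'d::finite" and \<Sigma> :: "'p \<Rightarrow> real^'d^'d"
  assumes P: "prob_space P" and \<Sigma>: "\<And>k. transpose (\<Sigma> k) = \<Sigma> k"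
    and moments: "\<And>\<theta>s t. \<forall>t. \<theta>s t \<in> prob_simplex \<Longrightarrow>
      integrable P (V \<theta>s t) \<and> integrable P (\<lambda>\<omega>. outer (V \<theta>s t \<omega>) (V \<theta>s t \<omega>)) \<and>
      cond_mean P (V \<theta>s t) = (\<Sum>k\<in>UNIV. \<theta>s t $ k *\<^sub>R \<mu> k) \<and>
      cond_cov P (V \<theta>s t) = (\<Sum>k\<in>UNIV. \<theta>s t $ k *\<^sub>R \<Sigma> k)"
  shows "tv_smp_with prob_simplex P V
    (\<lambda>kk. (1/2) *\<^sub>R (outer (\<mu> (fst kk)) (\<mu> (snd kk)) + outer (\<mu> (snd kk)) (\<mu> (fst kk))) + \<Sigma> (fst kk))
    (\<lambda>\<theta>. \<chi> kk. \<theta> $ fst kk * \<theta> $ snd kk)"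
proof (rule tv_smp_with_pair_weightsI)
  fix \<theta>s :: "nat \<Rightarrow> real^'p" and t
  assume \<theta>s: "\<forall>t. \<theta>s t \<in> prob_simplex"
  have "second_moment P (V \<theta>s t)
      = (\<Sum>k\<in>UNIV. \<theta>s t $ k *\<^sub>R \<Sigma> k)
        + (\<Sum>a\<in>UNIV. \<Sum>b\<in>UNIV. (\<theta>s t $ a * \<theta>s t $ b) *\<^sub>R outer (\<mu> a) (\<mu> b))"
    using moments[of \<theta>s t, OF \<theta>s] second_moment_eq_cond_cov_add[OF P, of "V \<theta>s t"]
    by (simp add: outer_sum_scaleR)
  also have "\<dots> = (\<Sum>a\<in>UNIV. \<Sum>b\<in>UNIV. (\<theta>s t $ a * \<theta>s t $ b) *\<^sub>R \<Sigma> a)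
        + (\<Sum>a\<in>UNIV. \<Sum>b\<in>UNIV. (\<theta>s t $ a * \<theta>s t $ b) *\<^sub>R
            ((1/2) *\<^sub>R (outer (\<mu> a) (\<mu> b) + outer (\<mu> b) (\<mu> a))))"
    using \<theta>s by (simp only: sum_simplex_weights_eq_sum_pairs sum_pair_weights_symmetrize)
  finally show "second_moment P (V \<theta>s t) = (\<Sum>a\<in>UNIV. \<Sum>b\<in>UNIV. (\<theta>s t $ a * \<theta>s t $ b) *\<^sub>R
      ((1/2) *\<^sub>R (outer (\<mu> (fst (a, b))) (\<mu> (snd (a, b))) + outer (\<mu> (snd (a, b))) (\<mu> (fst (a, b))))
        + \<Sigma> (fst (a, b))))"
    by (simp only: fst_conv snd_conv scaleR_add_right sum.distrib add.commute)
qed (simp add: \<Sigma> transpose_add transpose_scalar transpose_outer add.commute)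

theorem corollary3:
  fixes va :: "'p::finite \<Rightarrow> real^'d::finite"
    and Pa :: "'a measure" and Va :: "(nat \<Rightarrow> real^'p) \<Rightarrow> nat \<Rightarrow> 'a \<Rightarrow> real^'d"
    and Pb :: "'b measure" and Vb :: "(nat \<Rightarrow> real^'p) \<Rightarrow> nat \<Rightarrow> 'b \<Rightarrow> real^'d"
    and Vk :: "nat \<Rightarrow> 'p \<Rightarrow> 'b \<Rightarrow> real^'d"
    and Pc :: "'c measure" and Vc :: "(nat \<Rightarrow> real^'p) \<Rightarrow> nat \<Rightarrow> 'c \<Rightarrow> real^'d"
    and \<mu> :: "'p \<Rightarrow> real^'d" and \<Sigma> :: "'p \<Rightarrow> real^'d^'d"
  shows
   "(prob_space Pa \<and>
     (\<forall>\<theta>s. (\<forall>t. \<theta>s t \<in> prob_simplex) \<longrightarrow>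
        (\<forall>t \<omega>. Va \<theta>s t \<omega> = (\<Sum>k\<in>UNIV. (\<theta>s t) $ k *\<^sub>R va k)))
     \<longrightarrow> tv_smp_with prob_simplex Pa Va
          (\<lambda>kk. (1/2) *\<^sub>R (outer (va (fst kk)) (va (snd kk)) + outer (va (snd kk)) (va (fst kk))))
          (\<lambda>\<theta>. \<chi> kk. \<theta> $ fst kk * \<theta> $ snd kk))
  \<and>
    (prob_space Pb \<and>
     (\<forall>t k. Vk t k \<in> borel_measurable Pb) \<and>
     (\<forall>t k k'. integrable Pb (\<lambda>\<omega>. outer (Vk t k \<omega>) (Vk t k' \<omega>))) \<and>
     prob_space.indep_vars Pb (\<lambda>_. borel) (\<lambda>t \<omega>. \<chi> k. Vk t k \<omega>) UNIV \<and>
     (\<forall>t. distr Pb borel (\<lambda>\<omega>. \<chi> k. Vk t k \<omega>) = distr Pb borel (\<lambda>\<omega>. \<chi> k. Vk 0 k \<omega>)) \<and>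
     (\<forall>\<theta>s. (\<forall>t. \<theta>s t \<in> prob_simplex) \<longrightarrow>
        (\<forall>t \<omega>. Vb \<theta>s t \<omega> = (\<Sum>k\<in>UNIV. (\<theta>s t) $ k *\<^sub>R Vk t k \<omega>)))
     \<longrightarrow> tv_smp_with prob_simplex Pb Vb
          (\<lambda>kk. (1/2) *\<^sub>R integral\<^sup>L Pb (\<lambda>\<omega>. outer (Vk 0 (fst kk) \<omega>) (Vk 0 (snd kk) \<omega>)
                                       + outer (Vk 0 (snd kk) \<omega>) (Vk 0 (fst kk) \<omega>)))
          (\<lambda>\<theta>. \<chi> kk. \<theta> $ fst kk * \<theta> $ snd kk))
  \<and>
    (prob_space Pc \<and>
     (\<forall>k. transpose (\<Sigma> k) = \<Sigma> k) \<and>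
     (\<forall>\<theta>s. (\<forall>t. \<theta>s t \<in> prob_simplex) \<longrightarrow>
        (\<forall>t. integrable Pc (Vc \<theta>s t) \<and>
             integrable Pc (\<lambda>\<omega>. outer (Vc \<theta>s t \<omega>) (Vc \<theta>s t \<omega>)) \<and>
             cond_mean Pc (Vc \<theta>s t) = (\<Sum>k\<in>UNIV. (\<theta>s t) $ k *\<^sub>R \<mu> k) \<and>
             cond_cov Pc (Vc \<theta>s t) = (\<Sum>k\<in>UNIV. (\<theta>s t) $ k *\<^sub>R \<Sigma> k)))
     \<longrightarrow> tv_smp_with prob_simplex Pc Vc
          (\<lambda>kk. (1/2) *\<^sub>R (outer (\<mu> (fst kk)) (\<mu> (snd kk)) + outer (\<mu> (snd kk)) (\<mu> (fst kk)))
                 + \<Sigma> (fst kk))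
          (\<lambda>\<theta>. \<chi> kk. \<theta> $ fst kk * \<theta> $ snd kk))"
  apply (intro conjI impI; elim conjE)
  subgoal by (rule tv_smp_deterministic_vertices) blast+
  subgoal by (rule tv_smp_random_vertices) blast+
  subgoal by (rule tv_smp_affine_moments) blast+
  done

end
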